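(* Let $l>0$ and $(a,M)\in\mathcal B_l$. Then $G_2$ is twice differentiable at $r_{\Delta,frac}$, and there is $b=b(a,M,l)>0$ such that for all $r\in(r_+,\bar r_+)$ $$\frac{2V_{axi}(r)\,G_2'(r)}{g_1(r)}\ \ge\ b\,\frac{r^2+a^2}{r\Delta(r)},$$ where $G_2'=\frac{dG_2}{dr^\star}$.
   Context: $\Delta(r)=(r^2+a^2)(1-\frac{r^2}{l^2})-2Mr$; $(a,M)\in\mathcal B_l$ means $\Delta$ has four distinct real roots $\bar r_-<0\le r_-<r_+<\bar r_+$. The tortoise coordinate $r^\star$ satisfies $\frac{dr^\star}{dr}=\frac{r^2+a^2}{\Delta}$. $g_1=\frac{r^2+a^2}{\sqrt\Delta}$, $V_{axi}=\frac{(r^2+a^2)^2}{\Delta}$. $r_{\Delta,frac}\in(r_+,\bar r_+)$ is the unique critical point (maximum) of $\frac{\Delta}{(r^2+a^2)^2}$ on $(r_+,\bar r_+)$. $G_2^2=V_{axi}-\min_{[r_+,\bar r_+]}V_{axi}$, and $G_2=\sqrt{G_2^2}$ for $r\ge r_{\Delta,frac}$, $G_2=-\sqrt{G_2^2}$ for $r\le r_{\Delta,frac}$. *)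

theory Defs
  imports "HOL-Analysis.Analysis"
begin

definition Delta :: "real \<Rightarrow> real \<Rightarrow> real \<Rightarrow> real \<Rightarrow> real" where
  "Delta l a M r = (r\<^sup>2 + a\<^sup>2) * (1 - r\<^sup>2 / l\<^sup>2) - 2 * M * r"

text \<open>The four distinct real roots of Delta, ordered as in the definition of B_l.
  Delta is a quartic with nonzero leading coefficient, so these are all its roots.\<close>
definition Bl_roots :: "real \<Rightarrow> real \<Rightarrow> real \<Rightarrow> real \<Rightarrow> real \<Rightarrow> real \<Rightarrow> real \<Rightarrow> bool" where
  "Bl_roots l a M rmb rm rp rpb \<longleftrightarrow>
     rmb < 0 \<and> 0 \<le> rm \<and> rm < rp \<and> rp < rpb \<and>
     Delta l a M rmb = 0 \<and> Delta l a M rm = 0 \<and> Delta l a M rp = 0 \<and> Delta l a M rpb = 0"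

definition in_Bl :: "real \<Rightarrow> real \<Rightarrow> real \<Rightarrow> bool" where
  "in_Bl l a M \<longleftrightarrow> (\<exists>rmb rm rp rpb. Bl_roots l a M rmb rm rp rpb)"

definition g1 :: "real \<Rightarrow> real \<Rightarrow> real \<Rightarrow> real \<Rightarrow> real" where
  "g1 l a M r = (r\<^sup>2 + a\<^sup>2) / sqrt (Delta l a M r)"

definition V_axi :: "real \<Rightarrow> real \<Rightarrow> real \<Rightarrow> real \<Rightarrow> real" where
  "V_axi l a M r = (r\<^sup>2 + a\<^sup>2)\<^sup>2 / Delta l a M r"

definition r_frac :: "real \<Rightarrow> real \<Rightarrow> real \<Rightarrow> real \<Rightarrow> real \<Rightarrow> real" where
  "r_frac l a M rp rpb = (THE r. rp < r \<and> r < rpb \<and>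
      deriv (\<lambda>s. Delta l a M s / (s\<^sup>2 + a\<^sup>2)\<^sup>2) r = 0)"

text \<open>min of V_axi over [rp, rpb]; V_axi is +infinity at the endpoints (Delta = 0),
  so the minimum is the infimum over the open interval.\<close>
definition V_min :: "real \<Rightarrow> real \<Rightarrow> real \<Rightarrow> real \<Rightarrow> real \<Rightarrow> real" where
  "V_min l a M rp rpb = Inf (V_axi l a M ` {rp<..<rpb})"

definition G2sq :: "real \<Rightarrow> real \<Rightarrow> real \<Rightarrow> real \<Rightarrow> real \<Rightarrow> real \<Rightarrow> real" where
  "G2sq l a M rp rpb r = V_axi l a M r - V_min l a M rp rpb"

definition G2 :: "real \<Rightarrow> real \<Rightarrow> real \<Rightarrow> real \<Rightarrow> real \<Rightarrow> real \<Rightarrow> real" where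
  "G2 l a M rp rpb r =
     (if r \<ge> r_frac l a M rp rpb then sqrt (G2sq l a M rp rpb r)
      else - sqrt (G2sq l a M rp rpb r))"

text \<open>Derivative of G2 with respect to the tortoise coordinate r*:
  dG2/dr* = (dG2/dr) * Delta/(r^2+a^2), since dr*/dr = (r^2+a^2)/Delta.\<close>
definition G2' :: "real \<Rightarrow> real \<Rightarrow> real \<Rightarrow> real \<Rightarrow> real \<Rightarrow> real \<Rightarrow> real" where
  "G2' l a M rp rpb r = deriv (G2 l a M rp rpb) r * Delta l a M r / (r\<^sup>2 + a\<^sup>2)"

end

theory Submission imports Defs begin

text \<open>
  Differentiating \<open>Delta/(r\<^sup>2 + a\<^sup>2)\<^sup>2\<close> gives \<open>-2 P/(r\<^sup>2 + a\<^sup>2)\<^sup>3\<close> for a cubic \<open>P\<close>, and Rolle's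
  theorem between consecutive roots of \<open>Delta\<close> shows \<open>P = Xi (r - x1) (r - x2) (r - x3)\<close> with
  \<open>x1 \<le> x2 < rp < x3 < rpb\<close>; thus \<open>x3\<close> is the critical point \<open>r_frac\<close>. Since
  \<open>V_axi' = 2 (r\<^sup>2 + a\<^sup>2) P/Delta\<^sup>2\<close>, the potential attains its minimum \<open>v\<close> at \<open>x3\<close>, which is
  therefore a double root: \<open>(r\<^sup>2 + a\<^sup>2)\<^sup>2 - v Delta = (r - x3)\<^sup>2 R\<close> with a quadratic \<open>R > 0\<close> on
  \<open>[rp, rpb]\<close>. Hence \<open>G2 = (r - x3) sqrt (R/Delta)\<close> is smooth, a Wronskian identity gives
  \<open>dG2/dr\<^sup>* = Xi (r - x1) (r - x2)/sqrt (R Delta)\<close>, and the quantity to be estimated equals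
  \<open>phi r (r\<^sup>2 + a\<^sup>2)/(r Delta)\<close> with \<open>phi\<close> continuous and positive on the compact \<open>[rp, rpb]\<close>.
\<close>

lemma cubic_eq_prod_roots:
  fixes c3 c2 c1 c0 x1 x2 x3 x :: real
  assumes "x1 \<noteq> x2" "x1 \<noteq> x3" "x2 \<noteq> x3"
    and "c3*x1^3 + c2*x1^2 + c1*x1 + c0 = 0"
    and "c3*x2^3 + c2*x2^2 + c1*x2 + c0 = 0"
    and "c3*x3^3 + c2*x3^2 + c1*x3 + c0 = 0"
  shows "c3*x^3 + c2*x^2 + c1*x + c0 = c3*(x-x1)*(x-x2)*(x-x3)"
proof -
  have "(x1-x2)*(c3*(x1^2+x1*x2+x2^2) + c2*(x1+x2) + c1) = 0"
    using assms(4,5) by (simp add: algebra_simps power2_eq_square power3_eq_cube)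
  then have e12: "c3*(x1^2+x1*x2+x2^2) + c2*(x1+x2) + c1 = 0"
    using assms(1) by simp
  have "(x1-x3)*(c3*(x1^2+x1*x3+x3^2) + c2*(x1+x3) + c1) = 0"
    using assms(4,6) by (simp add: algebra_simps power2_eq_square power3_eq_cube)
  then have e13: "c3*(x1^2+x1*x3+x3^2) + c2*(x1+x3) + c1 = 0"
    using assms(2) by simp
  have "(x2-x3)*(c3*(x1+x2+x3) + c2) = 0"
    using e12 e13 by (simp add: algebra_simps power2_eq_square)
  then have "c3*(x1+x2+x3) + c2 = 0"
    using assms(3) by simp
  then have c2: "c2 = -c3*(x1+x2+x3)"
    by (simp add: algebra_simps)
  have c1: "c1 = c3*(x1*x2+x1*x3+x2*x3)"
    using e12 c2 by (simp add: algebra_simps power2_eq_square)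
  have c0: "c0 = -c3*x1*x2*x3"
    using assms(4) c1 c2 by (simp add: algebra_simps power2_eq_square power3_eq_cube)
  show ?thesis
    unfolding c0 c1 c2 by (simp add: algebra_simps power2_eq_square power3_eq_cube)
qed

lemma quartic_eq_prod_roots:
  fixes c4 c3 c2 c1 c0 y1 y2 y3 y4 x :: real
  assumes "y1 \<noteq> y2" "y1 \<noteq> y3" "y1 \<noteq> y4" "y2 \<noteq> y3" "y2 \<noteq> y4" "y3 \<noteq> y4"
    and "c4*y1^4 + c3*y1^3 + c2*y1^2 + c1*y1 + c0 = 0"
    and "c4*y2^4 + c3*y2^3 + c2*y2^2 + c1*y2 + c0 = 0"
    and "c4*y3^4 + c3*y3^3 + c2*y3^2 + c1*y3 + c0 = 0"
    and "c4*y4^4 + c3*y4^3 + c2*y4^2 + c1*y4 + c0 = 0"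
  shows "c4*x^4 + c3*x^3 + c2*x^2 + c1*x + c0 = c4*(x-y1)*(x-y2)*(x-y3)*(x-y4)"
proof -
  define d3 where "d3 = c3 + c4*(y1+y2+y3+y4)"
  define d2 where "d2 = c2 - c4*(y1*y2+y1*y3+y1*y4+y2*y3+y2*y4+y3*y4)"
  define d1 where "d1 = c1 + c4*(y1*y2*y3+y1*y2*y4+y1*y3*y4+y2*y3*y4)"
  define d0 where "d0 = c0 - c4*y1*y2*y3*y4"
  \<comment> \<open>the difference of the two sides is a cubic vanishing at the four distinct points\<close>
  have diff: "c4*x^4 + c3*x^3 + c2*x^2 + c1*x + c0 - c4*(x-y1)*(x-y2)*(x-y3)*(x-y4)
      = d3*x^3 + d2*x^2 + d1*x + d0" for x
    unfolding d3_def d2_def d1_def d0_def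
    by (simp add: algebra_simps power2_eq_square power3_eq_cube power4_eq_xxxx)
  have z: "d3*y1^3 + d2*y1^2 + d1*y1 + d0 = 0" "d3*y2^3 + d2*y2^2 + d1*y2 + d0 = 0"
    "d3*y3^3 + d2*y3^2 + d1*y3 + d0 = 0" "d3*y4^3 + d2*y4^2 + d1*y4 + d0 = 0"
    using assms(7-10) diff[symmetric] by simp_all
  have cubic: "d3*x^3 + d2*x^2 + d1*x + d0 = d3*(x-y1)*(x-y2)*(x-y3)" for x
    using assms z by (intro cubic_eq_prod_roots) auto
  have "d3*(y4-y1)*(y4-y2)*(y4-y3) = 0"
    using cubic[of y4] z(4) by simp
  then have "d3 = 0"
    using assms(1-6) by simp
  then show ?thesis
    using cubic[of x] diff[of x] by simp
qed

lemma isCont_eq_at_point: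
  fixes g h :: "real \<Rightarrow> real"
  assumes "isCont g c" "isCont h c" "\<And>x. x \<noteq> c \<Longrightarrow> g x = h x"
  shows "g c = h c"
proof -
  have "g \<midarrow>c\<rightarrow> g c"
    using assms(1) by (simp add: isCont_def)
  moreover have "\<forall>\<^sub>F x in at c. h x = g x"
    using assms(3) by (auto simp: eventually_at_filter)
  then have "g \<midarrow>c\<rightarrow> h c"
    using assms(2) tendsto_cong unfolding isCont_def by metis
  ultimately show ?thesis
    by (rule LIM_unique)
qed

definition Delta_deriv :: "real \<Rightarrow> real \<Rightarrow> real \<Rightarrow> real \<Rightarrow> real" where
  "Delta_deriv l a M r = -4*r^3/l^2 + 2*(1 - a^2/l^2)*r - 2*M"

definition Xi :: "real \<Rightarrow> real \<Rightarrow> real" where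
  "Xi l a = 1 + a^2/l^2"

lemma Xi_pos: "Xi l a > 0"
  unfolding Xi_def by (simp add: add_pos_nonneg)

lemma sum_sq_pos: "0 < r \<Longrightarrow> 0 < r^2 + (a::real)^2"
  by (simp add: add_pos_nonneg)

definition crit_poly :: "real \<Rightarrow> real \<Rightarrow> real \<Rightarrow> real \<Rightarrow> real" where
  "crit_poly l a M r = Xi l a*r^3 - 3*M*r^2 + Xi l a*a^2*r + M*a^2"

lemma Delta_eq_quartic:
  "Delta l a M r = (-1/l^2)*r^4 + 0*r^3 + (1 - a^2/l^2)*r^2 + (-2*M)*r + a^2"
  unfolding Delta_def
  by (simp add: algebra_simps power2_eq_square power4_eq_xxxx add_divide_distrib)

lemma has_real_derivative_Delta:
  assumes "l \<noteq> 0"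
  shows "(Delta l a M has_real_derivative Delta_deriv l a M r) (at r)"
  unfolding Delta_def[abs_def] Delta_deriv_def using assms
  by (auto intro!: derivative_eq_intros
      simp: algebra_simps power2_eq_square power3_eq_cube diff_divide_distrib add_divide_distrib)

lemma crit_poly_eq:
  "4*r * Delta l a M r - (r^2 + a^2) * Delta_deriv l a M r = 2*crit_poly l a M r"
  unfolding Delta_def Delta_deriv_def crit_poly_def Xi_def
  by (simp add: algebra_simps power2_eq_square power3_eq_cube diff_divide_distrib add_divide_distrib)

lemma has_real_derivative_sum_sq_squared:
  "((\<lambda>s. (s^2 + a^2)^2) has_real_derivative 4*r*(r^2 + a^2)) (at r)"
  by (auto intro!: derivative_eq_intros simp: power2_eq_square algebra_simps)

lemma has_real_derivative_Delta_frac: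
  assumes "l \<noteq> 0" "r^2 + a^2 \<noteq> 0"
  shows "((\<lambda>s. Delta l a M s / (s^2 + a^2)^2) has_real_derivative
      -2*crit_poly l a M r / (r^2 + a^2)^3) (at r)"
proof -
  have quotient_rule: "((\<lambda>s. Delta l a M s / (s^2 + a^2)^2) has_real_derivative
      (Delta_deriv l a M r * (r^2 + a^2)^2 - Delta l a M r * (4*r*(r^2 + a^2)))
        / ((r^2 + a^2)^2 * (r^2 + a^2)^2)) (at r)"
    using assms by (intro DERIV_divide has_real_derivative_Delta has_real_derivative_sum_sq_squared) simp_all
  have cancel: "-A*(2*P) / (A^2*A^2) = -2*P / A^3" if "A \<noteq> 0" for A P :: real
    using that by (simp add: field_simps power2_eq_square power3_eq_cube)
  have "Delta_deriv l a M r * (r^2 + a^2)^2 - Delta l a M r * (4*r*(r^2 + a^2))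
      = -(r^2 + a^2)*(2*crit_poly l a M r)"
    unfolding crit_poly_eq[symmetric] by (simp add: algebra_simps power2_eq_square)
  then have "(Delta_deriv l a M r * (r^2 + a^2)^2 - Delta l a M r * (4*r*(r^2 + a^2)))
        / ((r^2 + a^2)^2 * (r^2 + a^2)^2) = -2*crit_poly l a M r / (r^2 + a^2)^3"
    using cancel[OF assms(2)] by (simp only:)
  then show ?thesis
    using quotient_rule by (simp only:)
qed

lemma has_real_derivative_V_axi:
  assumes "l \<noteq> 0" "Delta l a M r \<noteq> 0"
  shows "(V_axi l a M has_real_derivative
      2*(r^2 + a^2)*crit_poly l a M r / (Delta l a M r)^2) (at r)"
proof -
  have "((\<lambda>s. (s^2 + a^2)^2 / Delta l a M s) has_real_derivative
      (4*r*(r^2 + a^2) * Delta l a M r - (r^2 + a^2)^2 * Delta_deriv l a M r)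
        / (Delta l a M r * Delta l a M r)) (at r)"
    using assms by (intro DERIV_divide has_real_derivative_Delta has_real_derivative_sum_sq_squared)
  moreover have "4*r*(r^2 + a^2) * Delta l a M r - (r^2 + a^2)^2 * Delta_deriv l a M r
      = 2*(r^2 + a^2)*crit_poly l a M r"
    using crit_poly_eq[of r l a M] by (simp add: algebra_simps power2_eq_square)
  ultimately show ?thesis
    unfolding V_axi_def[abs_def] by (simp add: power2_eq_square)
qed

lemma crit_poly_root_between:
  assumes "l \<noteq> 0" "u < w" "Delta l a M u = 0" "Delta l a M w = 0"
    and "\<And>s. u \<le> s \<Longrightarrow> s \<le> w \<Longrightarrow> s^2 + a^2 \<noteq> 0"
  obtains x where "u < x" "x < w" "crit_poly l a M x = 0"
proof -
  define f where "f s = Delta l a M s / (s^2 + a^2)^2" for s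
  have f_deriv: "(f has_real_derivative -2*crit_poly l a M s / (s^2 + a^2)^3) (at s)"
    if "u \<le> s" "s \<le> w" for s
    unfolding f_def[abs_def] using assms(1) assms(5)[OF that] by (rule has_real_derivative_Delta_frac)
  have "\<exists>x>u. x < w \<and> (f has_real_derivative 0) (at x)"
  proof (rule Rolle)
    show "f u = f w"
      unfolding f_def using assms(3,4) by simp
    show "continuous_on {u..w} f"
      using f_deriv by (intro continuous_at_imp_continuous_on ballI DERIV_isCont) auto
    show "f differentiable at x" if "u < x" "x < w" for x
      using f_deriv[of x] that unfolding real_differentiable_def by force
  qed fact
  then obtain x where x: "u < x" "x < w" "(f has_real_derivative 0) (at x)"
    by blast
  then have "-2*crit_poly l a M x / (x^2 + a^2)^3 = 0"
    using DERIV_unique f_deriv[of x] by force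
  then have "crit_poly l a M x = 0"
    using assms(5)[of x] x by auto
  with x show ?thesis
    using that by blast
qed

text \<open>\<open>level_poly l a M v = Delta * (V_axi - v)\<close>; a double root \<open>c\<close> splits off as
  \<open>(r - c)\<^sup>2 * level_quot l a v c r\<close>.\<close>

definition level_poly :: "real \<Rightarrow> real \<Rightarrow> real \<Rightarrow> real \<Rightarrow> real \<Rightarrow> real" where
  "level_poly l a M v r = (r^2 + a^2)^2 - v * Delta l a M r"

definition level_poly_deriv :: "real \<Rightarrow> real \<Rightarrow> real \<Rightarrow> real \<Rightarrow> real \<Rightarrow> real" where
  "level_poly_deriv l a M v r = 4*r*(r^2 + a^2) - v * Delta_deriv l a M r"

definition level_quot :: "real \<Rightarrow> real \<Rightarrow> real \<Rightarrow> real \<Rightarrow> real \<Rightarrow> real" where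
  "level_quot l a v c r =
     (1 + v/l^2)*r^2 + 2*c*(1 + v/l^2)*r + (2*a^2 - v * (1 - a^2/l^2) + 3*c^2*(1 + v/l^2))"

definition level_quot_deriv :: "real \<Rightarrow> real \<Rightarrow> real \<Rightarrow> real \<Rightarrow> real \<Rightarrow> real" where
  "level_quot_deriv l a v c r = 2*(1 + v/l^2)*r + 2*c*(1 + v/l^2)"

lemma level_poly_taylor:
  "level_poly l a M v r
     = (r - c)^2*level_quot l a v c r + level_poly_deriv l a M v c*(r - c) + level_poly l a M v c"
  unfolding level_poly_def level_poly_deriv_def level_quot_def Delta_def Delta_deriv_def
  by (simp add: algebra_simps power2_eq_square power3_eq_cube diff_divide_distrib add_divide_distrib)

lemma level_poly_deriv_taylor:
  "level_poly_deriv l a M v r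
     = 2*(r - c)*level_quot l a v c r + (r - c)^2*level_quot_deriv l a v c r
       + level_poly_deriv l a M v c"
  unfolding level_poly_deriv_def level_quot_def level_quot_deriv_def Delta_deriv_def
  by (simp add: algebra_simps power2_eq_square power3_eq_cube diff_divide_distrib add_divide_distrib)

lemma level_poly_wronskian:
  "level_poly_deriv l a M v r * Delta l a M r - level_poly l a M v r * Delta_deriv l a M r
     = 2*(r^2 + a^2)*crit_poly l a M r"
proof -
  have "level_poly_deriv l a M v r * Delta l a M r - level_poly l a M v r * Delta_deriv l a M r
      = (r^2 + a^2)*(4*r * Delta l a M r - (r^2 + a^2) * Delta_deriv l a M r)"
    unfolding level_poly_deriv_def level_poly_def by (simp add: algebra_simps power2_eq_square)
  then show ?thesis
    using crit_poly_eq by simp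
qed

lemma has_real_derivative_level_quot:
  "l \<noteq> 0 \<Longrightarrow> (level_quot l a v c has_real_derivative level_quot_deriv l a v c r) (at r)"
  unfolding level_quot_def[abs_def] level_quot_deriv_def
  by (auto intro!: derivative_eq_intros simp: power2_eq_square algebra_simps)

locale Bl_config =
  fixes l a M rmb rm rp rpb :: real
  assumes l_pos: "l > 0"
    and roots: "Bl_roots l a M rmb rm rp rpb"
begin

lemma l_nonzero: "l \<noteq> 0"
  using l_pos by simp

lemma root_order: "rmb < 0" "0 \<le> rm" "rm < rp" "rp < rpb"
  using roots unfolding Bl_roots_def by auto

lemma Delta_roots:
  "Delta l a M rmb = 0" "Delta l a M rm = 0" "Delta l a M rp = 0" "Delta l a M rpb = 0"
  using roots unfolding Bl_roots_def by auto

lemma Delta_eq_prod_roots: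
  "Delta l a M r = (1/l^2)*(r - rmb)*(r - rm)*(r - rp)*(rpb - r)"
proof -
  have "Delta l a M r = (-1/l^2)*(r - rmb)*(r - rm)*(r - rp)*(r - rpb)"
    unfolding Delta_eq_quartic using root_order Delta_roots
    by (intro quartic_eq_prod_roots) (auto simp: Delta_eq_quartic)
  also have "\<dots> = (1/l^2)*(r - rmb)*(r - rm)*(r - rp)*(rpb - r)"
    by (simp add: divide_simps flip: mult_minus_right)
  finally show ?thesis .
qed

lemma Delta_pos: "rp < r \<Longrightarrow> r < rpb \<Longrightarrow> Delta l a M r > 0"
  unfolding Delta_eq_prod_roots using root_order l_nonzero by (auto intro!: mult_pos_pos)

lemma crit_poly_factor:
  obtains x1 x2 x3 where "x1 \<le> x2" "x2 < rp" "rp < x3" "x3 < rpb"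
    and "\<And>r. crit_poly l a M r = Xi l a*(r - x1)*(r - x2)*(r - x3)"
proof -
  obtain x3 where x3: "rp < x3" "x3 < rpb" "crit_poly l a M x3 = 0"
    using crit_poly_root_between[OF l_nonzero root_order(4) Delta_roots(3,4)]
      sum_sq_pos[of _ a] root_order by force
  show ?thesis
  proof (cases "a = 0")
    case True
    \<comment> \<open>now \<open>r\<^sup>2 + a\<^sup>2\<close> vanishes at the root 0 of \<open>Delta\<close>, so Rolle is not available below \<open>rp\<close>\<close>
    have crit: "crit_poly l a M r = r^2*(r - 3*M)" for r
      unfolding crit_poly_def Xi_def True by (simp add: algebra_simps power2_eq_square power3_eq_cube)
    then have "x3 = 3*M"
      using x3 root_order by simp
    then show ?thesis
      using that[of 0 0 x3] x3 root_order crit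
      by (simp add: Xi_def True power2_eq_square)
  next
    case False
    then have nonzero: "s^2 + a^2 \<noteq> 0" for s
      by (simp add: add_nonneg_eq_0_iff)
    obtain x1 where x1: "rmb < x1" "x1 < rm" "crit_poly l a M x1 = 0"
      using crit_poly_root_between[OF l_nonzero _ Delta_roots(1,2) nonzero] root_order by force
    obtain x2 where x2: "rm < x2" "x2 < rp" "crit_poly l a M x2 = 0"
      using crit_poly_root_between[OF l_nonzero _ Delta_roots(2,3) nonzero] root_order by force
    have "Xi l a*r^3 + (-3*M)*r^2 + (Xi l a*a^2)*r + M*a^2 = Xi l a*(r - x1)*(r - x2)*(r - x3)" for r
      using x1 x2 x3 root_order by (intro cubic_eq_prod_roots) (auto simp: crit_poly_def)
    then show ?thesis
      using that[of x1 x2 x3] x1 x2 x3 unfolding crit_poly_def by (simp add: algebra_simps)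
  qed
qed

end

locale Bl_factored = Bl_config +
  fixes x1 x2 x3 :: real
  assumes x1_le_x2: "x1 \<le> x2" and x2_less_rp: "x2 < rp"
    and x3_between: "rp < x3" "x3 < rpb"
    and crit_poly_factored: "crit_poly l a M r = Xi l a*(r - x1)*(r - x2)*(r - x3)"
begin

lemma outer_factors_pos: "rp \<le> r \<Longrightarrow> 0 < Xi l a*(r - x1)*(r - x2)"
  using Xi_pos x1_le_x2 x2_less_rp by (intro mult_pos_pos) auto

lemma crit_poly_neg: "rp \<le> r \<Longrightarrow> r < x3 \<Longrightarrow> crit_poly l a M r < 0"
  using outer_factors_pos[of r] unfolding crit_poly_factored by (simp add: mult_pos_neg)

lemma crit_poly_pos: "x3 < r \<Longrightarrow> 0 < crit_poly l a M r"
  using outer_factors_pos[of r] x3_between unfolding crit_poly_factored by simp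

lemma crit_poly_eq_0_iff: "rp \<le> r \<Longrightarrow> crit_poly l a M r = 0 \<longleftrightarrow> r = x3"
  using outer_factors_pos[of r] unfolding crit_poly_factored by auto

lemma deriv_Delta_frac:
  "0 < r \<Longrightarrow> deriv (\<lambda>s. Delta l a M s / (s^2 + a^2)^2) r = -2*crit_poly l a M r / (r^2 + a^2)^3"
  using has_real_derivative_Delta_frac[OF l_nonzero] sum_sq_pos
  by (intro DERIV_imp_deriv) simp

lemma r_frac_eq: "r_frac l a M rp rpb = x3"
  unfolding r_frac_def
proof (rule the_equality)
  show "rp < x3 \<and> x3 < rpb \<and> deriv (\<lambda>s. Delta l a M s / (s^2 + a^2)^2) x3 = 0"
    using x3_between root_order crit_poly_eq_0_iff[of x3] deriv_Delta_frac[of x3] by simp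
next
  fix r
  assume "rp < r \<and> r < rpb \<and> deriv (\<lambda>s. Delta l a M s / (s^2 + a^2)^2) r = 0"
  then show "r = x3"
    using root_order crit_poly_eq_0_iff[of r] deriv_Delta_frac[of r] sum_sq_pos[of r a] by auto
qed

lemma has_real_derivative_V_axi_interval:
  "rp < r \<Longrightarrow> r < rpb \<Longrightarrow>
    (V_axi l a M has_real_derivative 2*(r^2 + a^2)*crit_poly l a M r / (Delta l a M r)^2) (at r)"
  using Delta_pos[of r] by (intro has_real_derivative_V_axi[OF l_nonzero]) auto

lemma continuous_on_V_axi: "rp < u \<Longrightarrow> w < rpb \<Longrightarrow> continuous_on {u..w} (V_axi l a M)"
  using has_real_derivative_V_axi_interval[THEN DERIV_isCont]
  by (intro continuous_at_imp_continuous_on) auto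

lemma V_axi_deriv_neg: "rp < s \<Longrightarrow> s < x3 \<Longrightarrow> 2*(s^2 + a^2)*crit_poly l a M s / (Delta l a M s)^2 < 0"
  using x3_between root_order sum_sq_pos[of s a] Delta_pos[of s] crit_poly_neg[of s]
  by (simp add: mult_pos_neg divide_neg_pos)

lemma V_axi_deriv_pos: "x3 < s \<Longrightarrow> s < rpb \<Longrightarrow> 0 < 2*(s^2 + a^2)*crit_poly l a M s / (Delta l a M s)^2"
  using x3_between root_order sum_sq_pos[of s a] Delta_pos[of s] crit_poly_pos[of s] by simp

lemma V_axi_gt_crit:
  assumes "rp < r" "r < rpb" "r \<noteq> x3"
  shows "V_axi l a M x3 < V_axi l a M r"
proof (cases "r < x3")
  case True
  show ?thesis
  proof (rule DERIV_neg_imp_decreasing_open[OF True])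
    fix s assume "r < s" "s < x3"
    then show "\<exists>y. (V_axi l a M has_real_derivative y) (at s) \<and> y < 0"
      using assms x3_between V_axi_deriv_neg[of s] has_real_derivative_V_axi_interval[of s] by auto
  qed (use assms x3_between continuous_on_V_axi in auto)
next
  case False
  then have "x3 < r"
    using assms(3) by simp
  then show ?thesis
  proof (rule DERIV_pos_imp_increasing_open)
    fix s assume "x3 < s" "s < r"
    then show "\<exists>y. (V_axi l a M has_real_derivative y) (at s) \<and> y > 0"
      using assms x3_between V_axi_deriv_pos[of s] has_real_derivative_V_axi_interval[of s] by auto
  qed (use assms x3_between continuous_on_V_axi in auto)
qed

lemma V_min_eq: "V_min l a M rp rpb = V_axi l a M x3"
  unfolding V_min_def
proof (rule cInf_eq_minimum)
  show "V_axi l a M x3 \<in> V_axi l a M ` {rp<..<rpb}"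
    using x3_between by simp
  fix v
  assume "v \<in> V_axi l a M ` {rp<..<rpb}"
  then obtain r where "rp < r" "r < rpb" "v = V_axi l a M r"
    by auto
  then show "V_axi l a M x3 \<le> v"
    using V_axi_gt_crit[of r] by (cases "r = x3") auto
qed

abbreviation V_crit :: real where
  "V_crit \<equiv> V_axi l a M x3"

abbreviation R :: "real \<Rightarrow> real" where
  "R \<equiv> level_quot l a V_crit x3"

abbreviation R' :: "real \<Rightarrow> real" where
  "R' \<equiv> level_quot_deriv l a V_crit x3"

lemma Delta_crit_pos: "Delta l a M x3 > 0"
  using Delta_pos x3_between by simp

lemma level_poly_eq: "level_poly l a M V_crit r = (r - x3)^2*R r"
  and level_poly_deriv_eq: "level_poly_deriv l a M V_crit r = 2*(r - x3)*R r + (r - x3)^2*R' r"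
proof -
  \<comment> \<open>\<open>x3\<close> is a double root: the level polynomial vanishes there, and the Wronskian identity
    together with \<open>crit_poly x3 = 0\<close> kills its derivative\<close>
  have root: "level_poly l a M V_crit x3 = 0"
    unfolding level_poly_def V_axi_def using Delta_crit_pos by simp
  moreover have "level_poly_deriv l a M V_crit x3 * Delta l a M x3 = 0"
    using level_poly_wronskian[of l a M V_crit x3] root crit_poly_factored[of x3] by simp
  then have "level_poly_deriv l a M V_crit x3 = 0"
    using Delta_crit_pos by simp
  ultimately show "level_poly l a M V_crit r = (r - x3)^2*R r"
    and "level_poly_deriv l a M V_crit r = 2*(r - x3)*R r + (r - x3)^2*R' r"
    using level_poly_taylor[of l a M V_crit r x3] level_poly_deriv_taylor[of l a M V_crit r x3]
    by simp_all
qed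

lemma V_axi_minus_crit:
  "rp < r \<Longrightarrow> r < rpb \<Longrightarrow> V_axi l a M r - V_crit = level_poly l a M V_crit r / Delta l a M r"
  unfolding level_poly_def V_axi_def[of l a M r] using Delta_pos[of r] by (simp add: field_simps)

lemma G2sq_eq: "rp < r \<Longrightarrow> r < rpb \<Longrightarrow> G2sq l a M rp rpb r = (r - x3)^2*R r / Delta l a M r"
  unfolding G2sq_def V_min_eq V_axi_minus_crit level_poly_eq by simp

lemma R_pos_off_crit:
  assumes "rp \<le> r" "r \<le> rpb" "r \<noteq> x3"
  shows "R r > 0"
proof -
  have "level_poly l a M V_crit r > 0"
  proof (cases "r = rp \<or> r = rpb")
    case True
    then show ?thesis
      unfolding level_poly_def using Delta_roots sum_sq_pos[of r a] root_order by auto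
  next
    case False
    then have "rp < r" "r < rpb"
      using assms by auto
    then have "level_poly l a M V_crit r = (V_axi l a M r - V_crit) * Delta l a M r"
      using V_axi_minus_crit[of r] Delta_pos[of r] by simp
    then show ?thesis
      using V_axi_gt_crit Delta_pos \<open>rp < r\<close> \<open>r < rpb\<close> assms(3) by simp
  qed
  then show ?thesis
    unfolding level_poly_eq using assms(3) by (simp add: zero_less_mult_iff)
qed

lemma deriv_numer_eq:
  "2*R r*Delta l a M r + (r - x3)*(R' r*Delta l a M r - R r*Delta_deriv l a M r)
     = 2*Xi l a*(r^2 + a^2)*(r - x1)*(r - x2)"
    (is "?lhs r = ?rhs r")
proof -
  \<comment> \<open>multiplied by \<open>r - x3\<close> this is the Wronskian identity; at \<open>x3\<close> itself use continuity\<close>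
  have "(s - x3)*?lhs s = (s - x3)*?rhs s" for s
  proof -
    have "(s - x3)*?lhs s
        = level_poly_deriv l a M V_crit s*Delta l a M s - level_poly l a M V_crit s*Delta_deriv l a M s"
      unfolding level_poly_eq level_poly_deriv_eq by (simp add: algebra_simps power2_eq_square)
    also have "\<dots> = (s - x3)*?rhs s"
      unfolding level_poly_wronskian crit_poly_factored by (simp add: algebra_simps)
    finally show ?thesis .
  qed
  then have off_crit: "?lhs s = ?rhs s" if "s \<noteq> x3" for s
    using that by (metis mult_cancel_left right_minus_eq)
  have "?lhs x3 = ?rhs x3"
  proof (rule isCont_eq_at_point[where g = ?lhs and h = ?rhs])
    have "isCont R s" "isCont (Delta l a M) s" for s
      using has_real_derivative_level_quot has_real_derivative_Delta l_nonzero
      by (blast intro: DERIV_isCont)+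
    moreover have "isCont R' s" "isCont (Delta_deriv l a M) s" for s
      unfolding level_quot_deriv_def Delta_deriv_def by (intro continuous_intros; use l_nonzero in simp)+
    ultimately show "isCont ?lhs x3"
      by (intro continuous_intros) auto
    show "isCont ?rhs x3"
      by (intro continuous_intros)
  qed (rule off_crit)
  with off_crit show ?thesis
    by (cases "r = x3") auto
qed

lemma R_pos:
  assumes "rp \<le> r" "r \<le> rpb"
  shows "R r > 0"
proof (cases "r = x3")
  case True
  have "2*R x3*Delta l a M x3 = 2*(x3^2 + a^2)*(Xi l a*(x3 - x1)*(x3 - x2))"
    using deriv_numer_eq[of x3] by (simp add: ac_simps)
  moreover have "0 < 2*(x3^2 + a^2)*(Xi l a*(x3 - x1)*(x3 - x2))"
    using outer_factors_pos[of x3] sum_sq_pos[of x3 a] x3_between root_order by simp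
  ultimately have "2*R x3*Delta l a M x3 > 0"
    by simp
  then show ?thesis
    using True Delta_crit_pos by (simp add: zero_less_mult_iff)
qed (use assms R_pos_off_crit in auto)

lemma G2_eq: "rp < r \<Longrightarrow> r < rpb \<Longrightarrow> G2 l a M rp rpb r = (r - x3) * sqrt (R r) / sqrt (Delta l a M r)"
  using R_pos[of r] Delta_pos[of r]
  by (auto simp: G2_def r_frac_eq G2sq_eq real_sqrt_mult real_sqrt_divide abs_if field_simps)

definition G2_deriv :: "real \<Rightarrow> real" where
  "G2_deriv r = Xi l a*(r^2 + a^2)*(r - x1)*(r - x2) / (sqrt (R r)*Delta l a M r * sqrt (Delta l a M r))"

lemma has_real_derivative_G2:
  assumes "rp < r" "r < rpb"
  shows "(G2 l a M rp rpb has_real_derivative G2_deriv r) (at r)"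
proof -
  have R_r: "R r > 0" and D_r: "Delta l a M r > 0"
    using assms R_pos Delta_pos by auto
  have quotient_rule:
    "((\<lambda>s. (s - x3) * sqrt (R s) / sqrt (Delta l a M s)) has_real_derivative
       (((1 - 0) * sqrt (R r) + inverse (sqrt (R r)) / 2 * R' r * (r - x3)) * sqrt (Delta l a M r)
        - (r - x3) * sqrt (R r) * (inverse (sqrt (Delta l a M r)) / 2 * Delta_deriv l a M r))
       / (sqrt (Delta l a M r) * sqrt (Delta l a M r))) (at r)"
    using R_r D_r
    by (intro DERIV_divide DERIV_mult DERIV_diff DERIV_ident DERIV_const
        DERIV_chain2[OF DERIV_real_sqrt] has_real_derivative_level_quot has_real_derivative_Delta
        l_nonzero) auto
  have quotient_rule_simp:
    "(((1 - 0) * sR + inverse sR / 2 * A * y) * sD - y * sR * (inverse sD / 2 * B)) / (sD * sD)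
      = (2 * sR^2 * sD^2 + y * (A * sD^2 - sR^2 * B)) / (2 * sR * sD^2 * sD)"
    if "sR > 0" "sD > 0" for sR sD y A B :: real
    using that by (simp add: field_simps power2_eq_square)
  have "(G2 l a M rp rpb has_real_derivative G2_deriv r) (at r)"
  proof (rule DERIV_cong[OF has_field_derivative_transform_within_open[OF quotient_rule]])
    show "open {rp<..<rpb}" "r \<in> {rp<..<rpb}"
      using assms by auto
    show "(s - x3) * sqrt (R s) / sqrt (Delta l a M s) = G2 l a M rp rpb s"
      if "s \<in> {rp<..<rpb}" for s
      using that G2_eq by simp
    show "(((1 - 0) * sqrt (R r) + inverse (sqrt (R r)) / 2 * R' r * (r - x3)) * sqrt (Delta l a M r)
        - (r - x3) * sqrt (R r) * (inverse (sqrt (Delta l a M r)) / 2 * Delta_deriv l a M r))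
       / (sqrt (Delta l a M r) * sqrt (Delta l a M r)) = G2_deriv r"
      using R_r D_r
      unfolding quotient_rule_simp[OF real_sqrt_gt_zero[OF R_r] real_sqrt_gt_zero[OF D_r]]
        real_sqrt_pow2[OF less_imp_le[OF R_r]] real_sqrt_pow2[OF less_imp_le[OF D_r]]
        deriv_numer_eq G2_deriv_def
      by (simp add: mult.assoc)
  qed
  then show ?thesis .
qed

lemma deriv_G2: "rp < r \<Longrightarrow> r < rpb \<Longrightarrow> deriv (G2 l a M rp rpb) r = G2_deriv r"
  by (rule DERIV_imp_deriv[OF has_real_derivative_G2])

lemma deriv_G2_differentiable_at_crit: "deriv (G2 l a M rp rpb) differentiable at x3"
proof -
  have "R x3 > 0" "Delta l a M x3 > 0"
    using R_pos x3_between Delta_crit_pos by auto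
  then have "G2_deriv differentiable at x3"
    unfolding G2_deriv_def
    using has_real_derivative_level_quot has_real_derivative_Delta l_nonzero
    by (intro derivative_intros differentiable_divide differentiable_mult;
        force simp: real_differentiable_def intro: DERIV_chain2[OF DERIV_real_sqrt])
  then obtain D where "(G2_deriv has_real_derivative D) (at x3)"
    unfolding real_differentiable_def by blast
  then have "(deriv (G2 l a M rp rpb) has_real_derivative D) (at x3)"
    by (rule has_field_derivative_transform_within_open[where S = "{rp<..<rpb}"])
      (use x3_between deriv_G2 in auto)
  then show ?thesis
    unfolding real_differentiable_def by blast
qed

definition phi :: "real \<Rightarrow> real" where
  "phi r = 2*Xi l a*r*(r - x1)*(r - x2) / sqrt (R r)"

lemma V_G2'_over_g1_eq:
  assumes "rp < r" "r < rpb"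
  shows "2 * V_axi l a M r * G2' l a M rp rpb r / g1 l a M r = phi r * (r^2 + a^2) / (r * Delta l a M r)"
proof -
  have simplify: "2*(A^2/D) * ((X*A*q/(sR*D * sD)) * D/A) / (A/sD) = (2*X*r*q/sR) * A/(r*D)"
    if "A > 0" "D > 0" "sD > 0" "sR > 0" "r > 0" for A D sD sR X q :: real
    using that by (simp add: field_simps power2_eq_square)
  have "0 < r" "0 < r^2 + a^2" "Delta l a M r > 0" "sqrt (Delta l a M r) > 0" "sqrt (R r) > 0"
    using assms root_order sum_sq_pos[of r a] Delta_pos R_pos by auto
  from simplify[OF this(2,3,4,5,1), of "Xi l a" "(r - x1)*(r - x2)"] show ?thesis
    unfolding G2'_def deriv_G2[OF assms] G2_deriv_def phi_def V_axi_def[of l a M r] g1_def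
    by (simp add: mult.assoc)
qed

lemma phi_pos:
  assumes "rp \<le> r" "r \<le> rpb"
  shows "phi r > 0"
proof -
  have "0 < 2*r*(Xi l a*(r - x1)*(r - x2))"
    using assms outer_factors_pos[of r] root_order by simp
  then show ?thesis
    unfolding phi_def using R_pos[OF assms] by (simp add: ac_simps)
qed

lemma continuous_on_phi: "continuous_on {rp..rpb} phi"
proof (intro continuous_at_imp_continuous_on ballI)
  fix r assume "r \<in> {rp..rpb}"
  then have "R r > 0"
    using R_pos by simp
  moreover have "isCont R r"
    using has_real_derivative_level_quot[OF l_nonzero] by (rule DERIV_isCont)
  ultimately show "isCont phi r"
    unfolding phi_def by (intro continuous_intros) auto
qed

lemma phi_lower_bound: "\<exists>b>0. \<forall>r\<in>{rp..rpb}. b \<le> phi r"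
proof -
  obtain r0 where "r0 \<in> {rp..rpb}" "\<And>r. r \<in> {rp..rpb} \<Longrightarrow> phi r0 \<le> phi r"
    using continuous_attains_inf[OF compact_Icc _ continuous_on_phi] root_order by auto
  then show ?thesis
    using phi_pos by (intro exI[of _ "phi r0"]) auto
qed

lemma V_G2'_over_g1_lower_bound:
  "\<exists>b>0. \<forall>r\<in>{rp<..<rpb}.
     2 * V_axi l a M r * G2' l a M rp rpb r / g1 l a M r \<ge> b * (r^2 + a^2) / (r * Delta l a M r)"
proof -
  obtain b where "b > 0" and b: "\<And>r. r \<in> {rp..rpb} \<Longrightarrow> b \<le> phi r"
    using phi_lower_bound by auto
  have "b * (r^2 + a^2) / (r * Delta l a M r) \<le> phi r * (r^2 + a^2) / (r * Delta l a M r)"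
    if "rp < r" "r < rpb" for r
    using that b[of r] root_order Delta_pos[of r]
    by (intro divide_right_mono mult_right_mono) auto
  then show ?thesis
    using \<open>b > 0\<close> V_G2'_over_g1_eq by auto
qed

lemma G2_differentiable: "rp < r \<Longrightarrow> r < rpb \<Longrightarrow> G2 l a M rp rpb differentiable at r"
  using has_real_derivative_G2 unfolding real_differentiable_def by blast

lemma G2_differentiable_near_crit: "\<forall>\<^sub>F s in nhds x3. G2 l a M rp rpb differentiable at s"
  unfolding eventually_nhds using x3_between G2_differentiable
  by (intro exI[of _ "{rp<..<rpb}"]) auto

end

theorem mainTheorem10:
  fixes l a M rmb rm rp rpb :: real
  assumes "l > 0"
    and "Bl_roots l a M rmb rm rp rpb"
  shows "(\<forall>\<^sub>F s in nhds (r_frac l a M rp rpb). G2 l a M rp rpb differentiable at s)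
      \<and> deriv (G2 l a M rp rpb) differentiable at (r_frac l a M rp rpb)
      \<and> (\<forall>r\<in>{rp<..<rpb}. G2 l a M rp rpb differentiable at r)
      \<and> (\<exists>b>0. \<forall>r\<in>{rp<..<rpb}.
           2 * V_axi l a M r * G2' l a M rp rpb r / g1 l a M r
             \<ge> b * (r\<^sup>2 + a\<^sup>2) / (r * Delta l a M r))"
proof -
  interpret Bl_config l a M rmb rm rp rpb
    using assms by unfold_locales
  obtain x1 x2 x3 where "x1 \<le> x2" "x2 < rp" "rp < x3" "x3 < rpb"
    and "\<And>r. crit_poly l a M r = Xi l a*(r - x1)*(r - x2)*(r - x3)"
    using crit_poly_factor by blast
  then interpret Bl_factored l a M rmb rm rp rpb x1 x2 x3
    by unfold_locales
  show ?thesis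
    using G2_differentiable_near_crit deriv_G2_differentiable_at_crit G2_differentiable
      V_G2'_over_g1_lower_bound
    unfolding r_frac_eq by auto
qed

end
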